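(* Let $1\le k\le n$ be integers, $\boldsymbol c\in\mathbb{R}^n$, and $\boldsymbol E\in\mathbb{R}^{n\times d}$ with unit-norm rows $\boldsymbol e_1,\dots,\boldsymbol e_n$ satisfying $\boldsymbol e_i^{\mathsf T}\boldsymbol e_j>-1$ for all $i\ne j$. Let $\lambda\ge 2$, $\theta\in[0,1)$, and $$f(\boldsymbol x)=\theta\,(k-1)\,\boldsymbol c^{\mathsf T}\boldsymbol x+(1-\theta)\,\boldsymbol x^{\mathsf T}(\lambda \boldsymbol I-\boldsymbol E\boldsymbol E^{\mathsf T})\boldsymbol x ,$$ considered on the feasible set $P=\{\boldsymbol x\in[0,1]^n:\boldsymbol 1^{\mathsf T}\boldsymbol x=k\}$. Then every stationary point $\boldsymbol x\in P$ of $\max_{P} f$ is either a local maximizer of $f$ on $P$, or a strict saddle in the following sense: there exist distinct indices $i,j$ and $\delta>0$ such that $\boldsymbol x+\delta(\boldsymbol e^{(i)}-\boldsymbol e^{(j)})\in P$, $\partial_i f(\boldsymbol x)=\partial_j f(\boldsymbol x)$, and the curvature $(\boldsymbol e^{(i)}-\boldsymbol e^{(j)})^{\mathsf T}\nabla^2 f\,(\boldsymbol e^{(i)}-\boldsymbol e^{(j)})=4(1-\theta)(\lambda-1+\boldsymbol e_i^{\mathsf T}\boldsymbol e_j)$ is strictly positive, so that $f(\boldsymbol x+\delta(\boldsymbol e^{(i)}-\boldsymbol e^{(j)}))>f(\boldsymbol x)$. Furthermore, every local maximizer of $f$ on $P$ is integral, i.e. lies in $\{0,1\}^n$.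
   Context: Here $\boldsymbol e^{(i)}$ denotes the $i$-th standard basis vector of $\mathbb{R}^n$ (distinct from the row $\boldsymbol e_i$ of $\boldsymbol E$). A stationary point is a KKT point of $\max_P f$: there is $\mu\in\mathbb{R}$ with $\partial_i f(\boldsymbol x)\le\mu$ whenever $x_i=0$, $\partial_i f(\boldsymbol x)\ge\mu$ whenever $x_i=1$, and $\partial_i f(\boldsymbol x)=\mu$ whenever $0<x_i<1$. A local maximizer is a point $\boldsymbol x^\ast\in P$ with $f(\boldsymbol x)\le f(\boldsymbol x^\ast)$ for all $\boldsymbol x\in P$ in some neighborhood of $\boldsymbol x^\ast$. *)

theory Defs
  imports "HOL-Analysis.Analysis"
begin

definition feasible :: "nat \<Rightarrow> (real ^ 'n) set" where
  "feasible k = {x. (\<forall>i. 0 \<le> x $ i \<and> x $ i \<le> 1) \<and> (\<Sum>i\<in>UNIV. x $ i) = real k}"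

text \<open>Objective f(x) = theta (k-1) c^T x + (1-theta) x^T (lam I - E E^T) x, where the rows
  of E are e i, so (E E^T)_{ij} = e i \<bullet> e j.\<close>
definition obj :: "nat \<Rightarrow> real \<Rightarrow> real \<Rightarrow> real ^ 'n \<Rightarrow> ('n \<Rightarrow> real ^ 'd) \<Rightarrow> real ^ 'n \<Rightarrow> real" where
  "obj k lam \<theta> c e x =
     \<theta> * (real k - 1) * (c \<bullet> x)
     + (1 - \<theta>) * (\<Sum>i\<in>UNIV. \<Sum>j\<in>UNIV.
          x $ i * ((if i = j then lam else 0) - e i \<bullet> e j) * x $ j)"

definition partial :: "(real ^ 'n \<Rightarrow> real) \<Rightarrow> real ^ 'n \<Rightarrow> 'n \<Rightarrow> real" where
  "partial f x i = frechet_derivative f (at x) (axis i 1)"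

definition stationary :: "(real ^ 'n \<Rightarrow> real) \<Rightarrow> (real ^ 'n) set \<Rightarrow> real ^ 'n \<Rightarrow> bool" where
  "stationary f P x \<longleftrightarrow> x \<in> P \<and> f differentiable (at x) \<and>
     (\<exists>\<mu>::real. \<forall>i. (x $ i = 0 \<longrightarrow> partial f x i \<le> \<mu>)
                   \<and> (x $ i = 1 \<longrightarrow> partial f x i \<ge> \<mu>)
                   \<and> (0 < x $ i \<and> x $ i < 1 \<longrightarrow> partial f x i = \<mu>))"

definition local_maximizer :: "(real ^ 'n \<Rightarrow> real) \<Rightarrow> (real ^ 'n) set \<Rightarrow> real ^ 'n \<Rightarrow> bool" where
  "local_maximizer f P x \<longleftrightarrow> x \<in> P \<and>
     (\<exists>\<epsilon>>0. \<forall>y\<in>P. dist y x < \<epsilon> \<longrightarrow> f y \<le> f x)"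

text \<open>Curvature v^T (Hessian of f at x) v, as the second derivative of t \<mapsto> f(x + t v) at 0.\<close>
definition curvature :: "(real ^ 'n \<Rightarrow> real) \<Rightarrow> real ^ 'n \<Rightarrow> real ^ 'n \<Rightarrow> real" where
  "curvature f x v = deriv (deriv (\<lambda>t. f (x + t *\<^sub>R v))) 0"

end

theory Submission
  imports Defs
begin

text \<open>
  Along an exchange direction \<open>axis p 1 - axis q 1\<close>, which keeps \<open>\<Sum>i. x $ i\<close> fixed, the
  objective is a quadratic in the step size with leading coefficient
  \<open>2 (1 - \<theta>) (lam - 1 + e p \<bullet> e q) > 0\<close>, so a step in the direction in which the linear
  term does not decrease strictly increases it. Since the coordinates of a feasible point sum
  to the integer \<open>k\<close>, a fractional coordinate comes with a second one, and both can be
  moved: hence local maximizers are integral, and at a stationary point with a fractional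
  coordinate the two partials agree, giving a strict saddle. At a stationary vertex either a
  \<open>0\<close>- and a \<open>1\<close>-coordinate have equal partials (again a strict saddle), or the KKT
  multiplier strictly separates the partials of the \<open>0\<close>-coordinates from those of the
  \<open>1\<close>-coordinates; then the linear term decreases at least linearly in the \<open>\<ell>\<^sub>1\<close>-distance
  within the feasible set, which beats the quadratic term near the vertex.
\<close>

definition quad_form :: "('n::finite \<Rightarrow> 'n \<Rightarrow> real) \<Rightarrow> real ^ 'n \<Rightarrow> real" where
  "quad_form M x = (\<Sum>a\<in>UNIV. \<Sum>b\<in>UNIV. x $ a * M a b * x $ b)"

definition quad_form_grad :: "('n::finite \<Rightarrow> 'n \<Rightarrow> real) \<Rightarrow> real ^ 'n \<Rightarrow> real ^ 'n" where
  "quad_form_grad M x = (\<chi> a. \<Sum>b\<in>UNIV. (M a b + M b a) * x $ b)"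

lemma inner_quad_form_grad:
  "quad_form_grad M x \<bullet> d = (\<Sum>a\<in>UNIV. \<Sum>b\<in>UNIV. x $ a * M a b * d $ b + d $ a * M a b * x $ b)"
proof -
  have "(\<Sum>a\<in>UNIV. \<Sum>b\<in>UNIV. x $ a * M a b * d $ b) = (\<Sum>a\<in>UNIV. \<Sum>b\<in>UNIV. x $ b * M b a * d $ a)"
    by (rule sum.swap)
  then show ?thesis
    by (simp add: inner_vec_def quad_form_grad_def sum.distrib sum_distrib_left sum_distrib_right
        algebra_simps)
qed

lemma quad_form_add:
  "quad_form M (x + d) = quad_form M x + quad_form_grad M x \<bullet> d + quad_form M d"
  unfolding inner_quad_form_grad quad_form_def by (simp add: sum.distrib algebra_simps)

lemma quad_form_scaleR: "quad_form M (t *\<^sub>R x) = t\<^sup>2 * quad_form M x"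
  unfolding quad_form_def by (simp add: sum_distrib_left power2_eq_square algebra_simps)

lemma has_derivative_quad_form:
  "(quad_form M has_derivative (\<lambda>d. quad_form_grad M x \<bullet> d)) (at x)"
  unfolding quad_form_def[abs_def] inner_quad_form_grad
  by (rule derivative_eq_intros bounded_linear.has_derivative[OF bounded_linear_vec_nth] refl)+
     (simp add: algebra_simps)

lemma sum_mult_axis_diff:
  "(\<Sum>a\<in>UNIV. h a * (axis p 1 - axis q 1 :: real ^ 'n::finite) $ a) = h p - h q"
proof -
  have "(\<Sum>a\<in>UNIV. h a * (axis p 1 - axis q 1 :: real ^ 'n) $ a)
      = (\<Sum>a\<in>UNIV. (if a = p then h a else 0) - (if a = q then h a else 0))"
    by (rule sum.cong) (auto simp: axis_def)
  then show ?thesis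
    by (simp add: sum_subtractf)
qed

lemma quad_form_axis_diff:
  "quad_form M (axis p 1 - axis q 1 :: real ^ 'n::finite) = M p p - M p q - (M q p - M q q)"
proof -
  let ?v = "axis p 1 - axis q 1 :: real ^ 'n"
  have "(\<Sum>b\<in>UNIV. ?v $ a * M a b * ?v $ b) = (M a p - M a q) * ?v $ a" for a
    using sum_mult_axis_diff[of "\<lambda>b. ?v $ a * M a b" p q] by (simp only: algebra_simps)
  then show ?thesis
    unfolding quad_form_def using sum_mult_axis_diff[of "\<lambda>a. M a p - M a q" p q] by simp
qed

lemma curvature_eqI:
  assumes "\<And>t. f (x + t *\<^sub>R v) = a + b * t + c * t\<^sup>2"
  shows "curvature f x v = 2 * c"
proof -
  have "deriv (\<lambda>t. a + b * t + c * t\<^sup>2) = (\<lambda>t. b + 2 * c * t)"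
  proof
    fix t :: real
    show "deriv (\<lambda>t. a + b * t + c * t\<^sup>2) t = b + 2 * c * t"
      by (rule DERIV_imp_deriv) (auto intro!: derivative_eq_intros)
  qed
  moreover have "deriv (\<lambda>t. b + 2 * c * t) 0 = 2 * c"
    by (rule DERIV_imp_deriv) (auto intro!: derivative_eq_intros)
  ultimately show ?thesis
    unfolding curvature_def assms by simp
qed

lemma partial_eqI:
  assumes "(f has_derivative (\<lambda>d. g \<bullet> d)) (at x)"
  shows "partial f x i = g $ i"
  unfolding partial_def frechet_derivative_at[OF assms, symmetric] by (simp add: inner_axis)
lemma feasible_bounds:
  assumes "x \<in> feasible k"
  shows "0 \<le> x $ i" "x $ i \<le> 1"
  using assms unfolding feasible_def by auto

lemma feasible_sum:
  assumes "x \<in> feasible k"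
  shows "(\<Sum>i\<in>UNIV. x $ i) = real k"
  using assms unfolding feasible_def by auto

lemma feasible_fractional_pair:
  assumes "x \<in> feasible k" "0 < x $ i" "x $ i < 1"
  obtains j where "j \<noteq> i" "0 < x $ j" "x $ j < 1"
proof (rule ccontr)
  assume "\<not> thesis"
  with that have no_other_fractional: "\<not> (0 < x $ j \<and> x $ j < 1)" if "j \<noteq> i" for j
    using \<open>j \<noteq> i\<close> by blast
  have "x $ j \<in> \<int>" if "j \<in> UNIV - {i}" for j
    using that no_other_fractional[of j] feasible_bounds[OF assms(1), of j] by (auto simp: less_le)
  then have "(\<Sum>j\<in>UNIV - {i}. x $ j) \<in> \<int>"
    by (rule Ints_sum)
  moreover have "x $ i = real k - (\<Sum>j\<in>UNIV - {i}. x $ j)"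
    using feasible_sum[OF assms(1)] sum.remove[of UNIV i "\<lambda>j. x $ j"] by simp
  ultimately have "x $ i \<in> \<int>"
    by simp
  with assms(2,3) show False
    by (auto elim: Ints_cases)
qed

lemma exchange_in_feasible:
  assumes "x \<in> feasible k" "p \<noteq> q" "0 \<le> \<delta>" "\<delta> \<le> 1 - x $ p" "\<delta> \<le> x $ q"
  shows "x + \<delta> *\<^sub>R (axis p 1 - axis q 1) \<in> feasible k"
proof -
  have "0 \<le> (x + \<delta> *\<^sub>R (axis p 1 - axis q 1)) $ i \<and> (x + \<delta> *\<^sub>R (axis p 1 - axis q 1)) $ i \<le> 1" for i
    using feasible_bounds[OF assms(1), of i] assms(2-5) by (auto simp: axis_def)
  moreover have "(\<Sum>i\<in>UNIV. (x + \<delta> *\<^sub>R (axis p 1 - axis q 1)) $ i) = real k"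
    using feasible_sum[OF assms(1)] sum_mult_axis_diff[of "\<lambda>_. \<delta>" p q] by (simp add: sum.distrib)
  ultimately show ?thesis
    unfolding feasible_def by blast
qed

lemma finite_strict_separation:
  fixes g :: "'a::finite \<Rightarrow> real"
  assumes "\<And>i j. P i \<Longrightarrow> Q j \<Longrightarrow> g i < g j"
  obtains t \<gamma> where "\<gamma> > 0" "\<And>i. P i \<Longrightarrow> g i + \<gamma> \<le> t" "\<And>j. Q j \<Longrightarrow> t + \<gamma> \<le> g j"
proof -
  let ?A = "g ` {i. P i}" and ?B = "g ` {j. Q j}"
  show thesis
  proof (cases "?A = {} \<or> ?B = {}")
    case True
    define t where "t = (if ?A = {} then (if ?B = {} then 0 else Min ?B - 1) else Max ?A + 1)"
    show ?thesis
      by (rule that[of 1 t]) (use True in \<open>auto simp: t_def\<close>)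
  next
    case False
    then have "Max ?A < Min ?B"
      using assms by auto
    have "g i \<le> Max ?A" if "P i" for i
      using that by simp
    moreover have "Min ?B \<le> g j" if "Q j" for j
      using that by simp
    ultimately show ?thesis
      using \<open>Max ?A < Min ?B\<close>
      by (intro that[of "(Min ?B - Max ?A) / 2" "(Max ?A + Min ?B) / 2"]) (fastforce simp: field_simps)+
  qed
qed

lemma inner_le_at_feasible_vertex:
  assumes "x \<in> feasible k" "y \<in> feasible k" "\<And>a. x $ a = 0 \<or> x $ a = 1"
    and "\<And>a. x $ a = 0 \<Longrightarrow> g $ a + \<gamma> \<le> t" "\<And>a. x $ a = 1 \<Longrightarrow> t + \<gamma> \<le> g $ a"
  shows "g \<bullet> (y - x) \<le> - \<gamma> * (\<Sum>a\<in>UNIV. \<bar>(y - x) $ a\<bar>)"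
proof -
  let ?d = "y - x"
  have "(\<Sum>a\<in>UNIV. ?d $ a) = 0"
    using feasible_sum[OF assms(1)] feasible_sum[OF assms(2)] by (simp add: sum_subtractf)
  then have "g \<bullet> ?d = (\<Sum>a\<in>UNIV. (g $ a - t) * ?d $ a)"
    by (simp add: inner_vec_def left_diff_distrib sum_subtractf flip: sum_distrib_left)
  also have "\<dots> \<le> (\<Sum>a\<in>UNIV. - \<gamma> * \<bar>?d $ a\<bar>)"
  proof (rule sum_mono)
    fix a
    from assms(3) consider "x $ a = 0" | "x $ a = 1"
      by blast
    then show "(g $ a - t) * ?d $ a \<le> - \<gamma> * \<bar>?d $ a\<bar>"
    proof cases
      case 1
      then have "?d $ a \<ge> 0"
        using feasible_bounds[OF assms(2), of a] by simp
      with assms(4)[OF 1] show ?thesis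
        using mult_right_mono[of "g $ a - t" "- \<gamma>" "?d $ a"] by simp
    next
      case 2
      then have "?d $ a \<le> 0"
        using feasible_bounds[OF assms(2), of a] by simp
      with assms(5)[OF 2] show ?thesis
        using mult_right_mono_neg[of \<gamma> "g $ a - t" "?d $ a"] by (simp add: algebra_simps)
    qed
  qed
  finally show ?thesis
    by (simp add: sum_distrib_left)
qed

lemma local_maximizer_at_feasible_vertex:
  assumes "x \<in> feasible k" "\<And>a. x $ a = 0 \<or> x $ a = 1"
    and separated: "\<And>i j. x $ i = 0 \<Longrightarrow> x $ j = 1 \<Longrightarrow> g $ i < g $ j"
    and "0 \<le> C" and expansion: "\<And>d. f (x + d) \<le> f x + g \<bullet> d + C * (\<Sum>a\<in>UNIV. (d $ a)\<^sup>2)"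
  shows "local_maximizer f (feasible k) x"
proof -
  obtain t \<gamma> where "\<gamma> > 0"
    and below: "\<And>a. x $ a = 0 \<Longrightarrow> g $ a + \<gamma> \<le> t" and above: "\<And>a. x $ a = 1 \<Longrightarrow> t + \<gamma> \<le> g $ a"
  proof (rule finite_strict_separation[where P = "\<lambda>a. x $ a = 0" and Q = "\<lambda>a. x $ a = 1"])
    show "g $ i < g $ j" if "x $ i = 0" "x $ j = 1" for i j
      using separated that .
  qed (rule that)
  define \<epsilon> where "\<epsilon> = \<gamma> / (C + 1)"
  have "\<epsilon> > 0" and "C * \<epsilon> \<le> \<gamma>"
    using \<open>\<gamma> > 0\<close> \<open>0 \<le> C\<close> by (auto simp: \<epsilon>_def field_simps)
  have "f y \<le> f x" if "y \<in> feasible k" "dist y x < \<epsilon>" for y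
  proof -
    let ?d = "y - x"
    let ?S = "\<Sum>a\<in>UNIV. \<bar>?d $ a\<bar>"
    have "(?d $ a)\<^sup>2 \<le> \<epsilon> * \<bar>?d $ a\<bar>" for a
    proof -
      have "\<bar>?d $ a\<bar> \<le> \<epsilon>"
        using component_le_norm_cart[of ?d a] \<open>dist y x < \<epsilon>\<close> by (simp add: dist_norm)
      then have "\<bar>?d $ a\<bar> * \<bar>?d $ a\<bar> \<le> \<epsilon> * \<bar>?d $ a\<bar>"
        by (rule mult_right_mono) simp
      then show ?thesis
        by (simp add: power2_eq_square)
    qed
    then have "C * (\<Sum>a\<in>UNIV. (?d $ a)\<^sup>2) \<le> C * \<epsilon> * ?S"
      using \<open>0 \<le> C\<close> by (simp add: mult.assoc sum_distrib_left mult_left_mono sum_mono)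
    also have "\<dots> \<le> \<gamma> * ?S"
      using \<open>C * \<epsilon> \<le> \<gamma>\<close> by (simp add: mult_right_mono sum_nonneg)
    finally have "C * (\<Sum>a\<in>UNIV. (?d $ a)\<^sup>2) \<le> \<gamma> * ?S" .
    moreover have "g \<bullet> ?d \<le> - \<gamma> * ?S"
      using inner_le_at_feasible_vertex[OF assms(1) that(1) assms(2) below above] .
    moreover have "f y \<le> f x + g \<bullet> ?d + C * (\<Sum>a\<in>UNIV. (?d $ a)\<^sup>2)"
      using expansion[of ?d] by simp
    ultimately show ?thesis
      by linarith
  qed
  with assms(1) \<open>\<epsilon> > 0\<close> show ?thesis
    unfolding local_maximizer_def by blast
qed

locale selection_objective =
  fixes k :: nat and lam \<theta> :: real and c :: "real ^ 'n::finite" and e :: "'n \<Rightarrow> real ^ 'd::finite"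
  assumes unit_rows: "\<And>i. norm (e i) = 1"
    and rows_not_antipodal: "\<And>i j. i \<noteq> j \<Longrightarrow> e i \<bullet> e j > -1"
    and lam_ge_2: "lam \<ge> 2"
    and theta_less_1: "\<theta> < 1"
begin

definition M :: "'n \<Rightarrow> 'n \<Rightarrow> real" where
  "M a b = (if a = b then lam else 0) - e a \<bullet> e b"

definition grad :: "real ^ 'n \<Rightarrow> real ^ 'n" where
  "grad x = (\<theta> * (real k - 1)) *\<^sub>R c + (1 - \<theta>) *\<^sub>R quad_form_grad M x"

lemma obj_eq_quad_form: "obj k lam \<theta> c e x = \<theta> * (real k - 1) * (c \<bullet> x) + (1 - \<theta>) * quad_form M x"
  by (simp add: obj_def quad_form_def M_def)

lemma obj_add:
  "obj k lam \<theta> c e (x + d) = obj k lam \<theta> c e x + grad x \<bullet> d + (1 - \<theta>) * quad_form M d"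
  unfolding obj_eq_quad_form quad_form_add grad_def by (simp add: inner_add_right algebra_simps)

lemma has_derivative_obj: "(obj k lam \<theta> c e has_derivative (\<lambda>d. grad x \<bullet> d)) (at x)"
  unfolding obj_eq_quad_form[abs_def] grad_def
  by (rule derivative_eq_intros has_derivative_quad_form refl | simp add: algebra_simps)+

lemma partial_obj: "partial (obj k lam \<theta> c e) x i = grad x $ i"
  by (rule partial_eqI[OF has_derivative_obj])

lemma quad_form_exchange:
  assumes "p \<noteq> q"
  shows "quad_form M (axis p 1 - axis q 1) = 2 * (lam - 1 + e p \<bullet> e q)"
  using assms unit_rows by (simp add: quad_form_axis_diff M_def inner_commute dot_square_norm)

lemma exchange_curvature_pos:
  assumes "p \<noteq> q"
  shows "lam - 1 + e p \<bullet> e q > 0"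
  using rows_not_antipodal[OF assms] lam_ge_2 by linarith

lemma obj_exchange:
  assumes "p \<noteq> q"
  shows "obj k lam \<theta> c e (x + \<delta> *\<^sub>R (axis p 1 - axis q 1))
    = obj k lam \<theta> c e x + (grad x $ p - grad x $ q) * \<delta> + 2 * (1 - \<theta>) * (lam - 1 + e p \<bullet> e q) * \<delta>\<^sup>2"
  unfolding obj_add quad_form_scaleR quad_form_exchange[OF assms]
  by (simp add: inner_diff_right inner_axis algebra_simps)

lemma curvature_obj_exchange:
  assumes "p \<noteq> q"
  shows "curvature (obj k lam \<theta> c e) x (axis p 1 - axis q 1) = 4 * (1 - \<theta>) * (lam - 1 + e p \<bullet> e q)"
  using curvature_eqI[OF obj_exchange[OF assms]] by simp

lemma obj_exchange_increases:
  assumes "p \<noteq> q" "\<delta> > 0" "grad x $ q \<le> grad x $ p"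
  shows "obj k lam \<theta> c e x < obj k lam \<theta> c e (x + \<delta> *\<^sub>R (axis p 1 - axis q 1))"
proof -
  have "0 < 2 * (1 - \<theta>) * (lam - 1 + e p \<bullet> e q) * \<delta>\<^sup>2"
    using exchange_curvature_pos[OF assms(1)] theta_less_1 assms(2) by simp
  moreover have "0 \<le> (grad x $ p - grad x $ q) * \<delta>"
    using assms(2,3) by simp
  ultimately show ?thesis
    unfolding obj_exchange[OF assms(1)] by linarith
qed

lemma quad_form_le: "quad_form M d \<le> lam * (\<Sum>a\<in>UNIV. (d $ a)\<^sup>2)"
proof -
  have "(\<Sum>b\<in>UNIV. d $ a * (if a = b then lam else 0) * d $ b)
      = (\<Sum>b\<in>UNIV. if a = b then lam * (d $ a)\<^sup>2 else 0)" for a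
    by (rule sum.cong) (auto simp: power2_eq_square)
  then have "(\<Sum>b\<in>UNIV. d $ a * (if a = b then lam else 0) * d $ b) = lam * (d $ a)\<^sup>2" for a
    by simp
  then have "quad_form M d = lam * (\<Sum>a\<in>UNIV. (d $ a)\<^sup>2)
      - (\<Sum>a\<in>UNIV. \<Sum>b\<in>UNIV. d $ a * (e a \<bullet> e b) * d $ b)"
    by (simp add: quad_form_def M_def right_diff_distrib left_diff_distrib sum_subtractf
        sum_distrib_left)
  also have "(\<Sum>a\<in>UNIV. \<Sum>b\<in>UNIV. d $ a * (e a \<bullet> e b) * d $ b)
      = (\<Sum>a\<in>UNIV. d $ a *\<^sub>R e a) \<bullet> (\<Sum>b\<in>UNIV. d $ b *\<^sub>R e b)"
    unfolding inner_sum_left inner_sum_right inner_scaleR_left inner_scaleR_right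
    by (subst sum.swap) (simp add: algebra_simps sum_distrib_left)
  finally show ?thesis
    by simp
qed

lemma obj_add_le:
  "obj k lam \<theta> c e (x + d) \<le> obj k lam \<theta> c e x + grad x \<bullet> d + (1 - \<theta>) * lam * (\<Sum>a\<in>UNIV. (d $ a)\<^sup>2)"
  unfolding obj_add using quad_form_le[of d] theta_less_1 by (simp add: mult.assoc)

definition strict_saddle :: "real ^ 'n \<Rightarrow> bool" where
  "strict_saddle x \<longleftrightarrow> (\<exists>i j \<delta>. i \<noteq> j \<and> \<delta> > 0 \<and>
     x + \<delta> *\<^sub>R (axis i 1 - axis j 1) \<in> feasible k \<and>
     partial (obj k lam \<theta> c e) x i = partial (obj k lam \<theta> c e) x j \<and>
     curvature (obj k lam \<theta> c e) x (axis i 1 - axis j 1) = 4 * (1 - \<theta>) * (lam - 1 + e i \<bullet> e j) \<and>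
     4 * (1 - \<theta>) * (lam - 1 + e i \<bullet> e j) > 0 \<and>
     obj k lam \<theta> c e (x + \<delta> *\<^sub>R (axis i 1 - axis j 1)) > obj k lam \<theta> c e x)"

lemma strict_saddleI:
  assumes "x \<in> feasible k" "p \<noteq> q" "0 < \<delta>" "\<delta> \<le> 1 - x $ p" "\<delta> \<le> x $ q"
    and "grad x $ p = grad x $ q"
  shows "strict_saddle x"
  unfolding strict_saddle_def
proof (intro exI conjI)
  show "x + \<delta> *\<^sub>R (axis p 1 - axis q 1) \<in> feasible k"
    using exchange_in_feasible[OF assms(1,2)] assms(3-5) by simp
  show "4 * (1 - \<theta>) * (lam - 1 + e p \<bullet> e q) > 0"
    using exchange_curvature_pos[OF assms(2)] theta_less_1 by simp
  show "obj k lam \<theta> c e (x + \<delta> *\<^sub>R (axis p 1 - axis q 1)) > obj k lam \<theta> c e x"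
    using obj_exchange_increases[OF assms(2,3)] assms(6) by simp
qed (use assms(2,3,6) in \<open>simp_all add: partial_obj curvature_obj_exchange\<close>)

lemma stationary_cases:
  assumes "stationary (obj k lam \<theta> c e) (feasible k) x"
  obtains (exchange) p q where "p \<noteq> q" "x $ p < 1" "0 < x $ q" "grad x $ p = grad x $ q"
    | (vertex) "\<And>a. x $ a = 0 \<or> x $ a = 1"
        "\<And>i j. x $ i = 0 \<Longrightarrow> x $ j = 1 \<Longrightarrow> grad x $ i < grad x $ j"
proof -
  obtain \<mu> where x: "x \<in> feasible k"
    and kkt: "\<And>i. (x $ i = 0 \<longrightarrow> grad x $ i \<le> \<mu>) \<and> (x $ i = 1 \<longrightarrow> \<mu> \<le> grad x $ i)
                \<and> (0 < x $ i \<and> x $ i < 1 \<longrightarrow> grad x $ i = \<mu>)"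
    using assms unfolding stationary_def partial_obj by blast
  show thesis
  proof (cases "\<exists>i. 0 < x $ i \<and> x $ i < 1")
    case True
    then obtain i where i: "0 < x $ i" "x $ i < 1"
      by blast
    obtain j where "j \<noteq> i" "0 < x $ j" "x $ j < 1"
      using feasible_fractional_pair[OF x i] .
    then show ?thesis
      using exchange[of i j] i kkt[of i] kkt[of j] by auto
  next
    case False
    then have integral: "x $ a = 0 \<or> x $ a = 1" for a
      using feasible_bounds[OF x, of a] by (meson antisym not_le)
    show ?thesis
    proof (cases "\<exists>i j. x $ i = 0 \<and> x $ j = 1 \<and> grad x $ i = grad x $ j")
      case True
      then obtain i j where "x $ i = 0" "x $ j = 1" "grad x $ i = grad x $ j"
        by blast
      then show ?thesis
        by (intro exchange[of i j]) auto
    next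
      case False
      have "grad x $ i \<le> grad x $ j" if "x $ i = 0" "x $ j = 1" for i j
        using kkt[of i] kkt[of j] that by auto
      with False show ?thesis
        by (intro vertex integral) (fastforce simp: less_le)
    qed
  qed
qed

lemma stationary_imp_local_maximizer_or_strict_saddle:
  assumes "stationary (obj k lam \<theta> c e) (feasible k) x"
  shows "local_maximizer (obj k lam \<theta> c e) (feasible k) x \<or> strict_saddle x"
proof -
  have x: "x \<in> feasible k"
    using assms unfolding stationary_def by blast
  from assms show ?thesis
  proof (cases rule: stationary_cases)
    case (exchange p q)
    then have "strict_saddle x"
      by (intro strict_saddleI[OF x, of p q "min (1 - x $ p) (x $ q)"]) auto
    then show ?thesis ..
  next
    case vertex
    have "0 \<le> (1 - \<theta>) * lam"
      using theta_less_1 lam_ge_2 by simp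
    with vertex have "local_maximizer (obj k lam \<theta> c e) (feasible k) x"
      using local_maximizer_at_feasible_vertex[OF x] obj_add_le by blast
    then show ?thesis ..
  qed
qed

lemma local_maximizer_imp_integral:
  assumes "local_maximizer (obj k lam \<theta> c e) (feasible k) x"
  shows "x $ i = 0 \<or> x $ i = 1"
proof (rule ccontr)
  assume "\<not> (x $ i = 0 \<or> x $ i = 1)"
  obtain \<epsilon> where x: "x \<in> feasible k" and "\<epsilon> > 0"
    and local_max: "\<And>y. y \<in> feasible k \<Longrightarrow> dist y x < \<epsilon> \<Longrightarrow> obj k lam \<theta> c e y \<le> obj k lam \<theta> c e x"
    using assms unfolding local_maximizer_def by blast
  have i: "0 < x $ i" "x $ i < 1"
    using feasible_bounds[OF x, of i] \<open>\<not> (x $ i = 0 \<or> x $ i = 1)\<close> by auto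
  obtain j where j: "j \<noteq> i" "0 < x $ j" "x $ j < 1"
    using feasible_fractional_pair[OF x i] .
  obtain p q where pq: "p \<noteq> q" "0 < x $ p" "x $ p < 1" "0 < x $ q" "x $ q < 1" "grad x $ q \<le> grad x $ p"
    using i j by (cases "grad x $ j \<le> grad x $ i") (auto intro: that[of i j] that[of j i])
  define \<delta> where "\<delta> = min (min (1 - x $ p) (x $ q)) (\<epsilon> / 3)"
  have \<delta>: "0 < \<delta>" "\<delta> \<le> 1 - x $ p" "\<delta> \<le> x $ q"
    using pq \<open>\<epsilon> > 0\<close> unfolding \<delta>_def by auto
  have "\<delta> \<le> \<epsilon> / 3"
    unfolding \<delta>_def by (rule min.cobounded2)
  let ?y = "x + \<delta> *\<^sub>R (axis p 1 - axis q 1)"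
  have "dist ?y x = \<delta> * norm (axis p 1 - axis q 1 :: real ^ 'n)"
    using \<delta>(1) by (simp add: dist_norm)
  also have "\<dots> \<le> \<delta> * 2"
    using norm_triangle_ineq4[of "axis p 1 :: real ^ 'n" "axis q 1"] \<delta>(1) by (intro mult_left_mono) auto
  finally have "dist ?y x < \<epsilon>"
    using \<open>\<delta> \<le> \<epsilon> / 3\<close> \<open>\<epsilon> > 0\<close> by linarith
  then have "obj k lam \<theta> c e ?y \<le> obj k lam \<theta> c e x"
    using local_max exchange_in_feasible[OF x pq(1)] \<delta> by simp
  with obj_exchange_increases[OF pq(1) \<delta>(1) pq(6)] show False
    by linarith
qed

end

theorem theorem2:
  fixes k :: nat and c :: "real ^ 'n" and e :: "'n \<Rightarrow> real ^ 'd"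
    and lam \<theta> :: real
  assumes hk: "1 \<le> k" "k \<le> CARD('n)"
    and unit: "\<And>i. norm (e i) = 1"
    and angle: "\<And>i j. i \<noteq> j \<Longrightarrow> e i \<bullet> e j > -1"
    and hlam: "lam \<ge> 2"
    and htheta: "0 \<le> \<theta>" "\<theta> < 1"
  shows "(\<forall>x. stationary (obj k lam \<theta> c e) (feasible k) x \<longrightarrow>
            local_maximizer (obj k lam \<theta> c e) (feasible k) x \<or>
            (\<exists>i j \<delta>. i \<noteq> j \<and> \<delta> > 0 \<and>
               x + \<delta> *\<^sub>R (axis i 1 - axis j 1) \<in> feasible k \<and>
               partial (obj k lam \<theta> c e) x i = partial (obj k lam \<theta> c e) x j \<and>
               curvature (obj k lam \<theta> c e) x (axis i 1 - axis j 1)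
                 = 4 * (1 - \<theta>) * (lam - 1 + e i \<bullet> e j) \<and>
               4 * (1 - \<theta>) * (lam - 1 + e i \<bullet> e j) > 0 \<and>
               obj k lam \<theta> c e (x + \<delta> *\<^sub>R (axis i 1 - axis j 1)) > obj k lam \<theta> c e x))
         \<and> (\<forall>x. local_maximizer (obj k lam \<theta> c e) (feasible k) x \<longrightarrow>
            (\<forall>i. x $ i = 0 \<or> x $ i = 1))"
proof -
  interpret selection_objective k lam \<theta> c e
    using unit angle hlam htheta(2) by unfold_locales
  show ?thesis
    using stationary_imp_local_maximizer_or_strict_saddle local_maximizer_imp_integral
    unfolding strict_saddle_def by blast
qed

end
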